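(* Let $k$ be a kernel on $\mathcal{X}$, $\sigma>0$, $f\in\mathcal{H}_k$, $g\in\mathcal{H}_{\sigma^2\delta}$, $h=f+g$. Let $x_1,\dots,x_t\in\mathcal{X}$ be pairwise distinct with observations $y_i=h(x_i)$, and let $\widehat x_1,\dots,\widehat x_L\in\mathcal{X}\setminus\{x_1,\dots,x_t\}$. Then $$\Big|\sum_{i=1}^L\widehat m_t(\widehat x_i)-\sum_{i=1}^L f(\widehat x_i)\Big|\le\|h\|_{\mathcal{H}_{k^\sigma}}\sqrt{\mathbf 1^T\mathbf{A}\mathbf 1+L^2\sigma^2}+L\|g\|_{\mathcal{H}_{\sigma^2\delta}}\sigma,$$ where $\mathbf{A}_{ij}=k(\widehat x_i,\widehat x_j)-\mathbf{k}_t(\widehat x_i)^T(\mathbf{K}_t+\sigma^2I)^{-1}\mathbf{k}_t(\widehat x_j)$.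
   Context: $\delta(x,y)=1$ if $x=y$, else $0$; $k^\sigma=k+\sigma^2\delta$; $\mathcal{H}_{\sigma^2\delta}$ is the RKHS of $\sigma^2\delta$. $\mathbf{k}_t(x)=[k(x,x_i)]_{i\le t}$, $\mathbf{K}_t=[k(x_i,x_j)]_{i,j\le t}$, $\mathbf{y}_t=[y_i]_{i\le t}$, $\widehat m_t(x)=\mathbf{k}_t(x)^T(\mathbf{K}_t+\sigma^2I)^{-1}\mathbf{y}_t$; $\mathbf 1$ is the all-ones vector. *)

theory Defs
  imports Complex_Main "Jordan_Normal_Form.Gauss_Jordan_Elimination"
begin

definition pd_kernel :: "('a \<Rightarrow> 'a \<Rightarrow> real) \<Rightarrow> bool" where
  "pd_kernel k \<longleftrightarrow> (\<forall>x y. k x y = k y x) \<and>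
     (\<forall>(xs :: 'a list) (c :: nat \<Rightarrow> real).
        0 \<le> (\<Sum>i<length xs. \<Sum>j<length xs. c i * c j * k (xs ! i) (xs ! j)))"

definition is_rkhs :: "('a \<Rightarrow> 'a \<Rightarrow> real) \<Rightarrow> ('a \<Rightarrow> real) set
      \<Rightarrow> (('a \<Rightarrow> real) \<Rightarrow> ('a \<Rightarrow> real) \<Rightarrow> real) \<Rightarrow> bool" where
  "is_rkhs k H ip \<longleftrightarrow>
     (\<lambda>x. 0) \<in> H \<and>
     (\<forall>f\<in>H. \<forall>g\<in>H. (\<lambda>x. f x + g x) \<in> H) \<and>
     (\<forall>f\<in>H. \<forall>a. (\<lambda>x. a * f x) \<in> H) \<and>
     (\<forall>f\<in>H. \<forall>g\<in>H. ip f g = ip g f) \<and>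
     (\<forall>f\<in>H. \<forall>g\<in>H. \<forall>h\<in>H. ip (\<lambda>x. f x + g x) h = ip f h + ip g h) \<and>
     (\<forall>f\<in>H. \<forall>g\<in>H. \<forall>a. ip (\<lambda>x. a * f x) g = a * ip f g) \<and>
     (\<forall>f\<in>H. 0 \<le> ip f f \<and> (ip f f = 0 \<longrightarrow> f = (\<lambda>x. 0))) \<and>
     (\<forall>F :: nat \<Rightarrow> 'a \<Rightarrow> real.
        (\<forall>n. F n \<in> H) \<and>
        (\<forall>e>0. \<exists>N. \<forall>m\<ge>N. \<forall>n\<ge>N.
            ip (\<lambda>x. F m x - F n x) (\<lambda>x. F m x - F n x) < e)
        \<longrightarrow> (\<exists>f\<in>H. \<forall>e>0. \<exists>N. \<forall>n\<ge>N.
            ip (\<lambda>x. F n x - f x) (\<lambda>x. F n x - f x) < e)) \<and>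
     (\<forall>x. k x \<in> H) \<and>
     (\<forall>f\<in>H. \<forall>x. ip f (k x) = f x)"

definition rkhs_norm :: "(('a \<Rightarrow> real) \<Rightarrow> ('a \<Rightarrow> real) \<Rightarrow> real) \<Rightarrow> ('a \<Rightarrow> real) \<Rightarrow> real" where
  "rkhs_norm ip h = sqrt (ip h h)"

definition delta_kernel :: "'a \<Rightarrow> 'a \<Rightarrow> real" where
  "delta_kernel x y = (if x = y then 1 else 0)"

definition noisy_kernel :: "('a \<Rightarrow> 'a \<Rightarrow> real) \<Rightarrow> real \<Rightarrow> 'a \<Rightarrow> 'a \<Rightarrow> real" where
  "noisy_kernel k \<sigma> x y = k x y + \<sigma>^2 * delta_kernel x y"

definition kvec :: "('a \<Rightarrow> 'a \<Rightarrow> real) \<Rightarrow> 'a list \<Rightarrow> 'a \<Rightarrow> real vec" where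
  "kvec k xs x = vec (length xs) (\<lambda>i. k x (xs ! i))"

definition Kmat :: "('a \<Rightarrow> 'a \<Rightarrow> real) \<Rightarrow> 'a list \<Rightarrow> real mat" where
  "Kmat k xs = mat (length xs) (length xs) (\<lambda>(i, j). k (xs ! i) (xs ! j))"

definition regInv :: "('a \<Rightarrow> 'a \<Rightarrow> real) \<Rightarrow> real \<Rightarrow> 'a list \<Rightarrow> real mat" where
  "regInv k \<sigma> xs = the (mat_inverse (Kmat k xs + \<sigma>^2 \<cdot>\<^sub>m 1\<^sub>m (length xs)))"

definition post_mean :: "('a \<Rightarrow> 'a \<Rightarrow> real) \<Rightarrow> real \<Rightarrow> 'a list \<Rightarrow> real vec \<Rightarrow> 'a \<Rightarrow> real" where
  "post_mean k \<sigma> xs ys x = kvec k xs x \<bullet> (regInv k \<sigma> xs *\<^sub>v ys)"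

definition post_cov :: "('a \<Rightarrow> 'a \<Rightarrow> real) \<Rightarrow> real \<Rightarrow> 'a list \<Rightarrow> 'a \<Rightarrow> 'a \<Rightarrow> real" where
  "post_cov k \<sigma> xs x x' = k x x' - kvec k xs x \<bullet> (regInv k \<sigma> xs *\<^sub>v kvec k xs x')"

end

theory Submission
  imports Defs "Jordan_Normal_Form.Determinant"
begin

text \<open>Write H for the RKHS of the noisy kernel k + \<sigma>^2 \<delta> and B for the sum of its
  sections at the test points. Off the diagonal the noisy kernel equals k, so at a test point the
  posterior mean of u is the value of the minimum-norm interpolant I(u) of u on the nodes.
  Interpolation is self-adjoint in H, hence the inner product of u with B - I(B) is the summed
  interpolation error of u, and the squared norm of B - I(B) is the summed posterior covariance of
  the noisy kernel, which exceeds that of k by at most L^2 \<sigma>^2. Cauchy-Schwarz for u = h and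
  the pointwise bound |g(x)| \<le> \<sigma> ||g|| give the estimate.

  That h = f + g lies in H at all is part of Aronszajn's theorem on sums of kernels; here it comes
  from completeness. The interpolation energies ||I(h)||^2 over finite node sets are bounded by
  ||f||^2 + ||g||^2, along nested node sets whose energies approach the supremum the interpolants
  form a Cauchy sequence, and the limit agrees with h at every point.\<close>

section \<open>Strictly positive definite kernels and their Gram matrices\<close>

definition strictly_pd_kernel :: "('a \<Rightarrow> 'a \<Rightarrow> real) \<Rightarrow> bool" where
  "strictly_pd_kernel K \<longleftrightarrow> (\<forall>x y. K x y = K y x) \<and>
     (\<forall>(xs :: 'a list) (c :: nat \<Rightarrow> real). distinct xs \<longrightarrow> (\<exists>i<length xs. c i \<noteq> 0) \<longrightarrow>
        0 < (\<Sum>i<length xs. \<Sum>j<length xs. c i * c j * K (xs ! i) (xs ! j)))"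

lemma strictly_pd_noisy_kernel:
  assumes k: "pd_kernel k" and "\<sigma> > 0"
  shows "strictly_pd_kernel (noisy_kernel k \<sigma>)"
  unfolding strictly_pd_kernel_def
proof (intro conjI allI impI)
  show "noisy_kernel k \<sigma> x y = noisy_kernel k \<sigma> y x" for x y
    using k by (simp add: pd_kernel_def noisy_kernel_def delta_kernel_def)
next
  fix xs :: "'a list" and c :: "nat \<Rightarrow> real"
  assume "distinct xs" and "\<exists>i<length xs. c i \<noteq> 0"
  let ?n = "length xs"
  have "(\<Sum>i<?n. \<Sum>j<?n. c i * c j * noisy_kernel k \<sigma> (xs ! i) (xs ! j))
      = (\<Sum>i<?n. \<Sum>j<?n. c i * c j * k (xs ! i) (xs ! j))
        + \<sigma>\<^sup>2 * (\<Sum>i<?n. \<Sum>j<?n. c i * c j * delta_kernel (xs ! i) (xs ! j))"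
    by (simp add: noisy_kernel_def algebra_simps sum.distrib sum_distrib_left)
  also have "(\<Sum>i<?n. \<Sum>j<?n. c i * c j * delta_kernel (xs ! i) (xs ! j)) = (\<Sum>i<?n. (c i)\<^sup>2)"
    using \<open>distinct xs\<close>
    by (intro sum.cong refl)
      (simp add: delta_kernel_def nth_eq_iff_index_eq power2_eq_square if_distrib cong: if_cong)
  finally have "(\<Sum>i<?n. \<Sum>j<?n. c i * c j * noisy_kernel k \<sigma> (xs ! i) (xs ! j))
      = (\<Sum>i<?n. \<Sum>j<?n. c i * c j * k (xs ! i) (xs ! j)) + \<sigma>\<^sup>2 * (\<Sum>i<?n. (c i)\<^sup>2)" .
  moreover have "0 \<le> (\<Sum>i<?n. \<Sum>j<?n. c i * c j * k (xs ! i) (xs ! j))"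
    using k unfolding pd_kernel_def by blast
  moreover obtain i where "i < ?n" "c i \<noteq> 0"
    using \<open>\<exists>i<?n. c i \<noteq> 0\<close> by blast
  then have "0 < (\<Sum>i<?n. (c i)\<^sup>2)"
    by (intro sum_pos2[of _ i]) auto
  ultimately show "0 < (\<Sum>i<?n. \<Sum>j<?n. c i * c j * noisy_kernel k \<sigma> (xs ! i) (xs ! j))"
    using \<open>\<sigma> > 0\<close> by (simp add: add_nonneg_pos)
qed

lemma Kmat_noisy_kernel:
  "distinct xs \<Longrightarrow> Kmat (noisy_kernel k \<sigma>) xs = Kmat k xs + \<sigma>\<^sup>2 \<cdot>\<^sub>m 1\<^sub>m (length xs)"
  by (intro eq_matI) (auto simp: Kmat_def noisy_kernel_def delta_kernel_def nth_eq_iff_index_eq)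

lemma Kmat_carrier: "Kmat K zs \<in> carrier_mat (length zs) (length zs)"
  by (simp add: Kmat_def)

lemma quadratic_form_Kmat:
  assumes "v \<in> carrier_vec (length zs)"
  shows "v \<bullet> (Kmat K zs *\<^sub>v v) = (\<Sum>i<length zs. \<Sum>j<length zs. v $ i * v $ j * K (zs ! i) (zs ! j))"
  using assms
  by (simp add: Kmat_def scalar_prod_def mult_mat_vec_def lessThan_atLeast0 sum_distrib_left mult_ac)

lemma det_Kmat_nonzero:
  assumes K: "strictly_pd_kernel K" and "distinct zs"
  shows "det (Kmat K zs) \<noteq> 0"
proof
  assume "det (Kmat K zs) = 0"
  then obtain v where v: "v \<in> carrier_vec (length zs)" "v \<noteq> 0\<^sub>v (length zs)"
    and Gv: "Kmat K zs *\<^sub>v v = 0\<^sub>v (length zs)"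
    using det_0_iff_vec_prod_zero_field[OF Kmat_carrier] by auto
  have "\<exists>i<length zs. v $ i \<noteq> 0"
    using v by (metis carrier_vecD eq_vecI index_zero_vec)
  with K \<open>distinct zs\<close> have "0 < v \<bullet> (Kmat K zs *\<^sub>v v)"
    unfolding quadratic_form_Kmat[OF v(1)] strictly_pd_kernel_def by blast
  with Gv v(1) show False by simp
qed

text \<open>Only meaningful when the Gram matrix is invertible (distinct nodes, strictly positive
  definite kernel); otherwise it is the unspecified value the None.\<close>

definition gram_inv :: "('a \<Rightarrow> 'a \<Rightarrow> real) \<Rightarrow> 'a list \<Rightarrow> real mat" where
  "gram_inv K zs = the (mat_inverse (Kmat K zs))"

lemma regInv_eq_gram_inv: "distinct xs \<Longrightarrow> regInv k \<sigma> xs = gram_inv (noisy_kernel k \<sigma>) xs"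
  by (simp add: regInv_def gram_inv_def Kmat_noisy_kernel)

lemma gram_inv:
  assumes K: "strictly_pd_kernel K" and "distinct zs"
  shows gram_inv_carrier: "gram_inv K zs \<in> carrier_mat (length zs) (length zs)"
    and Kmat_mult_gram_inv: "Kmat K zs * gram_inv K zs = 1\<^sub>m (length zs)"
    and transpose_gram_inv: "transpose_mat (gram_inv K zs) = gram_inv K zs"
proof -
  let ?n = "length zs" and ?G = "Kmat K zs"
  note G = Kmat_carrier[of K zs]
  obtain B where B: "mat_inverse ?G = Some B"
    using mat_inverse(1)[OF G, of "()"] det_non_zero_imp_unit[OF G det_Kmat_nonzero[OF assms], of "()"]
    by (cases "mat_inverse ?G") auto
  then have "gram_inv K zs = B" by (simp add: gram_inv_def)
  with mat_inverse(2)[OF G B] show carrier: "gram_inv K zs \<in> carrier_mat ?n ?n"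
    and GB: "?G * gram_inv K zs = 1\<^sub>m ?n"
    by auto
  have "transpose_mat ?G = ?G"
    using K by (intro eq_matI) (auto simp: Kmat_def strictly_pd_kernel_def)
  then have TG: "transpose_mat (gram_inv K zs) * ?G = 1\<^sub>m ?n"
    using transpose_mult[OF G carrier] GB by simp
  have "transpose_mat (gram_inv K zs) = transpose_mat (gram_inv K zs) * (?G * gram_inv K zs)"
    using GB carrier by simp
  also have "\<dots> = gram_inv K zs"
    using TG G carrier by (simp flip: assoc_mult_mat[of _ ?n ?n])
  finally show "transpose_mat (gram_inv K zs) = gram_inv K zs" .
qed

section \<open>Kernel interpolation\<close>

definition node_vals :: "'a list \<Rightarrow> ('a \<Rightarrow> real) \<Rightarrow> real vec" where
  "node_vals zs u = vec (length zs) (\<lambda>i. u (zs ! i))"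

definition kernel_comb :: "('a \<Rightarrow> 'a \<Rightarrow> real) \<Rightarrow> 'a list \<Rightarrow> real vec \<Rightarrow> 'a \<Rightarrow> real" where
  "kernel_comb K zs c x = kvec K zs x \<bullet> c"

lemma node_vals_carrier[simp]: "node_vals zs u \<in> carrier_vec (length zs)"
  by (simp add: node_vals_def)

lemma node_vals_add: "node_vals zs (\<lambda>x. f x + g x) = node_vals zs f + node_vals zs g"
  by (intro eq_vecI) (simp_all add: node_vals_def)

lemma node_vals_kernel_comb: "node_vals zs (kernel_comb K zs c) = Kmat K zs *\<^sub>v c"
  by (intro eq_vecI) (simp_all add: node_vals_def kernel_comb_def kvec_def Kmat_def)

definition kernel_interp :: "('a \<Rightarrow> 'a \<Rightarrow> real) \<Rightarrow> 'a list \<Rightarrow> ('a \<Rightarrow> real) \<Rightarrow> 'a \<Rightarrow> real" where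
  "kernel_interp K zs h = kernel_comb K zs (gram_inv K zs *\<^sub>v node_vals zs h)"

definition interp_energy :: "('a \<Rightarrow> 'a \<Rightarrow> real) \<Rightarrow> 'a list \<Rightarrow> ('a \<Rightarrow> real) \<Rightarrow> real" where
  "interp_energy K zs h = node_vals zs h \<bullet> (gram_inv K zs *\<^sub>v node_vals zs h)"

lemma node_vals_kernel_interp:
  assumes "strictly_pd_kernel K" and "distinct zs"
  shows "node_vals zs (kernel_interp K zs h) = node_vals zs h"
proof -
  have "Kmat K zs *\<^sub>v (gram_inv K zs *\<^sub>v node_vals zs h) = (Kmat K zs * gram_inv K zs) *\<^sub>v node_vals zs h"
    by (rule assoc_mult_mat_vec[symmetric, OF Kmat_carrier gram_inv_carrier[OF assms] node_vals_carrier])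
  then show ?thesis
    using Kmat_mult_gram_inv[OF assms] by (simp add: kernel_interp_def node_vals_kernel_comb)
qed

lemma kernel_interp_node:
  assumes "strictly_pd_kernel K" and "distinct zs" and "z \<in> set zs"
  shows "kernel_interp K zs h z = h z"
proof -
  obtain i where "i < length zs" "zs ! i = z" using \<open>z \<in> set zs\<close> by (meson in_set_conv_nth)
  with node_vals_kernel_interp[OF assms(1,2), of h] show ?thesis
    by (metis index_vec node_vals_def)
qed

definition kernel_sum :: "('a \<Rightarrow> 'a \<Rightarrow> real) \<Rightarrow> 'a list \<Rightarrow> 'a \<Rightarrow> real" where
  "kernel_sum K ps x = (\<Sum>l<length ps. K (ps ! l) x)"

definition noiseless_post_cov :: "('a \<Rightarrow> 'a \<Rightarrow> real) \<Rightarrow> 'a list \<Rightarrow> 'a \<Rightarrow> 'a \<Rightarrow> real" where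
  "noiseless_post_cov K zs x x' = K x x' - kvec K zs x \<bullet> (gram_inv K zs *\<^sub>v kvec K zs x')"

lemma noiseless_post_cov_eq_kernel_interp: "noiseless_post_cov K zs x x' = K x x' - kernel_interp K zs (K x') x"
  by (simp add: noiseless_post_cov_def kernel_interp_def kernel_comb_def kvec_def node_vals_def)

section \<open>Reproducing kernel Hilbert spaces\<close>

locale rkhs =
  fixes K :: "'a \<Rightarrow> 'a \<Rightarrow> real" and H :: "('a \<Rightarrow> real) set"
    and ip :: "('a \<Rightarrow> real) \<Rightarrow> ('a \<Rightarrow> real) \<Rightarrow> real"
  assumes is_rkhs: "is_rkhs K H ip"
begin

lemma zero_mem: "(\<lambda>x. 0) \<in> H"
  and add_mem: "f \<in> H \<Longrightarrow> g \<in> H \<Longrightarrow> (\<lambda>x. f x + g x) \<in> H"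
  and scale_mem: "f \<in> H \<Longrightarrow> (\<lambda>x. a * f x) \<in> H"
  and inner_commute: "f \<in> H \<Longrightarrow> g \<in> H \<Longrightarrow> ip f g = ip g f"
  and inner_add_left: "f \<in> H \<Longrightarrow> g \<in> H \<Longrightarrow> u \<in> H \<Longrightarrow> ip (\<lambda>x. f x + g x) u = ip f u + ip g u"
  and inner_scale_left: "f \<in> H \<Longrightarrow> u \<in> H \<Longrightarrow> ip (\<lambda>x. a * f x) u = a * ip f u"
  and inner_self_nonneg: "f \<in> H \<Longrightarrow> 0 \<le> ip f f"
  and kernel_mem: "K z \<in> H"
  and reproducing: "f \<in> H \<Longrightarrow> ip f (K z) = f z"
  using is_rkhs unfolding is_rkhs_def by blast+

lemma kernel_commute: "K x y = K y x"
  using reproducing[OF kernel_mem, of y x] reproducing[OF kernel_mem, of x y]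
    inner_commute[OF kernel_mem kernel_mem, of x y] by simp

lemma kernel_diag_nonneg: "0 \<le> K z z"
  using inner_self_nonneg[OF kernel_mem, of z] reproducing[OF kernel_mem, of z z] by simp

lemma diff_mem: "f \<in> H \<Longrightarrow> g \<in> H \<Longrightarrow> (\<lambda>x. f x - g x) \<in> H"
  using add_mem[of f "\<lambda>x. (-1) * g x"] scale_mem[of g "-1"] by simp

lemma inner_add_right:
  assumes "u \<in> H" "f \<in> H" "g \<in> H"
  shows "ip u (\<lambda>x. f x + g x) = ip u f + ip u g"
  using inner_add_left[OF assms(2,3,1)] inner_commute[OF assms(1) add_mem[OF assms(2,3)]]
    inner_commute[OF assms(1,2)] inner_commute[OF assms(1,3)] by simp

lemma inner_diff_left:
  assumes "f \<in> H" "g \<in> H" "u \<in> H"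
  shows "ip (\<lambda>x. f x - g x) u = ip f u - ip g u"
  using inner_add_left[OF assms(1) scale_mem[OF assms(2), of "-1"] assms(3)]
    inner_scale_left[OF assms(2,3), of "-1"] by simp

lemma inner_diff_right:
  assumes "u \<in> H" "f \<in> H" "g \<in> H"
  shows "ip u (\<lambda>x. f x - g x) = ip u f - ip u g"
  using inner_diff_left[OF assms(2,3,1)] inner_commute[OF assms(1) diff_mem[OF assms(2,3)]]
    inner_commute[OF assms(1,2)] inner_commute[OF assms(1,3)] by simp

lemma inner_diff_self:
  assumes "f \<in> H" "g \<in> H"
  shows "ip (\<lambda>x. f x - g x) (\<lambda>x. f x - g x) = ip f f - 2 * ip f g + ip g g"
  using inner_diff_left[OF assms diff_mem[OF assms]] inner_diff_right[OF assms(1) assms]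
    inner_diff_right[OF assms(2) assms] inner_commute[OF assms] by simp

lemma inner_diff_self_commute:
  assumes "f \<in> H" "g \<in> H"
  shows "ip (\<lambda>x. f x - g x) (\<lambda>x. f x - g x) = ip (\<lambda>x. g x - f x) (\<lambda>x. g x - f x)"
  using inner_diff_self[OF assms] inner_diff_self[OF assms(2,1)] inner_commute[OF assms] by simp

lemma cauchy_schwarz:
  assumes f: "f \<in> H" and g: "g \<in> H"
  shows "\<bar>ip f g\<bar> \<le> sqrt (ip f f) * sqrt (ip g g)"
proof -
  have "0 \<le> ip f f - 2 * t * ip f g + t\<^sup>2 * ip g g" for t
  proof -
    have tg: "(\<lambda>x. t * g x) \<in> H" using g by (rule scale_mem)
    have "ip f (\<lambda>x. t * g x) = t * ip f g"
      using inner_commute[OF f tg] inner_scale_left[OF g f] inner_commute[OF f g] by simp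
    moreover have "ip (\<lambda>x. t * g x) (\<lambda>x. t * g x) = t\<^sup>2 * ip g g"
      using inner_scale_left[OF g tg] inner_commute[OF g tg] inner_scale_left[OF g g]
      by (simp add: power2_eq_square)
    ultimately show ?thesis
      using inner_self_nonneg[OF diff_mem[OF f tg]] inner_diff_self[OF f tg] by simp
  qed
  then have "(ip f g)\<^sup>2 \<le> ip f f * ip g g"
  proof (cases "ip g g = 0")
    case True
    then show ?thesis
      using \<open>\<And>t. 0 \<le> _ t\<close>[of "(ip f f + 1) / (2 * ip f g)"]
      by (cases "ip f g = 0") (simp_all add: field_simps)
  next
    case False
    then have gg: "0 < ip g g" using inner_self_nonneg[OF g] by simp
    from \<open>\<And>t. 0 \<le> _ t\<close>[of "ip f g / ip g g"] gg show ?thesis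
      by (simp add: field_simps power2_eq_square)
  qed
  then have "sqrt ((ip f g)\<^sup>2) \<le> sqrt (ip f f * ip g g)" by (rule real_sqrt_le_mono)
  then show ?thesis by (simp add: real_sqrt_mult)
qed

lemma abs_eval_le: "f \<in> H \<Longrightarrow> \<bar>f z\<bar> \<le> sqrt (ip f f) * sqrt (K z z)"
  using cauchy_schwarz[OF _ kernel_mem, of f z] reproducing[of f z] reproducing[OF kernel_mem, of z z]
  by simp

lemma complete:
  assumes F: "\<And>n. F n \<in> H"
    and "\<forall>e>0. \<exists>N. \<forall>m\<ge>N. \<forall>n\<ge>N. ip (\<lambda>x. F m x - F n x) (\<lambda>x. F m x - F n x) < e"
  obtains u where "u \<in> H" and "(\<lambda>n. ip (\<lambda>x. F n x - u x) (\<lambda>x. F n x - u x)) \<longlonglongrightarrow> 0"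
proof -
  have "\<forall>F :: nat \<Rightarrow> 'a \<Rightarrow> real. (\<forall>n. F n \<in> H) \<and>
      (\<forall>e>0. \<exists>N. \<forall>m\<ge>N. \<forall>n\<ge>N. ip (\<lambda>x. F m x - F n x) (\<lambda>x. F m x - F n x) < e)
      \<longrightarrow> (\<exists>f\<in>H. \<forall>e>0. \<exists>N. \<forall>n\<ge>N. ip (\<lambda>x. F n x - f x) (\<lambda>x. F n x - f x) < e)"
    using is_rkhs unfolding is_rkhs_def by (elim conjE)
  then obtain u where u: "u \<in> H"
    and lim: "\<forall>e>0. \<exists>N. \<forall>n\<ge>N. ip (\<lambda>x. F n x - u x) (\<lambda>x. F n x - u x) < e"
    using assms by blast
  have "0 \<le> ip (\<lambda>x. F n x - u x) (\<lambda>x. F n x - u x)" for n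
    using F u by (intro inner_self_nonneg diff_mem)
  with lim have "(\<lambda>n. ip (\<lambda>x. F n x - u x) (\<lambda>x. F n x - u x)) \<longlonglongrightarrow> 0"
    unfolding lim_sequentially dist_real_def by simp
  with u show thesis by (rule that)
qed

lemma kernel_lincomb_mem: "finite A \<Longrightarrow> (\<lambda>x. \<Sum>i\<in>A. a i * K (z i) x) \<in> H"
  by (induction A rule: finite_induct) (simp_all add: zero_mem add_mem scale_mem kernel_mem)

lemma inner_kernel_lincomb:
  assumes "finite A" and u: "u \<in> H"
  shows "ip u (\<lambda>x. \<Sum>i\<in>A. a i * K (z i) x) = (\<Sum>i\<in>A. a i * u (z i))"
  using assms(1)
proof (induction A rule: finite_induct)
  case empty
  show ?case using inner_scale_left[OF u u, of 0] inner_commute[OF u zero_mem] by simp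
next
  case (insert b A)
  have "ip (\<lambda>x. a b * K (z b) x) u = a b * u (z b)"
    using u by (simp add: inner_scale_left kernel_mem inner_commute[OF kernel_mem] reproducing)
  with insert show ?case
    using u by (simp add: inner_add_right kernel_lincomb_mem scale_mem kernel_mem inner_commute[of u])
qed

lemma kernel_comb_eq_sum:
  "c \<in> carrier_vec (length zs) \<Longrightarrow> kernel_comb K zs c = (\<lambda>x. \<Sum>i\<in>{0..<length zs}. c $ i * K (zs ! i) x)"
  by (auto simp: kernel_comb_def kvec_def scalar_prod_def kernel_commute[of _ "zs ! _"] mult.commute
      intro!: sum.cong)

lemma kernel_comb_mem: "c \<in> carrier_vec (length zs) \<Longrightarrow> kernel_comb K zs c \<in> H"
  by (simp add: kernel_comb_eq_sum kernel_lincomb_mem)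

lemma inner_kernel_comb:
  "u \<in> H \<Longrightarrow> c \<in> carrier_vec (length zs) \<Longrightarrow> ip u (kernel_comb K zs c) = node_vals zs u \<bullet> c"
  by (simp add: kernel_comb_eq_sum inner_kernel_lincomb node_vals_def scalar_prod_def mult.commute)

lemma tendsto_eval_diff:
  assumes "\<And>n. F n \<in> H" "\<And>n. G n \<in> H"
    and "\<And>n. ip (\<lambda>x. F n x - G n x) (\<lambda>x. F n x - G n x) \<le> e n" and "e \<longlonglongrightarrow> 0"
  shows "(\<lambda>n. F n z - G n z) \<longlonglongrightarrow> 0"
proof -
  have bound: "\<bar>F n z - G n z\<bar> \<le> sqrt (e n) * sqrt (K z z)" for n
  proof -
    have "\<bar>F n z - G n z\<bar> \<le> sqrt (ip (\<lambda>x. F n x - G n x) (\<lambda>x. F n x - G n x)) * sqrt (K z z)"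
      by (rule abs_eval_le[OF diff_mem[OF assms(1,2)]])
    also have "\<dots> \<le> sqrt (e n) * sqrt (K z z)"
      by (intro mult_right_mono real_sqrt_le_mono assms(3)) (simp add: kernel_diag_nonneg)
    finally show ?thesis .
  qed
  have "(\<lambda>n. sqrt (e n)) \<longlonglongrightarrow> 0"
    using tendsto_real_sqrt[OF assms(4)] by simp
  then have lim: "(\<lambda>n. sqrt (e n) * sqrt (K z z)) \<longlonglongrightarrow> 0"
    by (rule tendsto_mult_left_zero)
  have "(\<lambda>n. \<bar>F n z - G n z\<bar>) \<longlonglongrightarrow> 0"
    by (rule tendsto_sandwich[OF _ _ tendsto_const lim]) (simp_all add: bound)
  then show ?thesis by (simp only: tendsto_rabs_zero_iff)
qed

lemma kernel_sum_mem: "kernel_sum K ps \<in> H"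
  using kernel_lincomb_mem[of "{..<length ps}" "\<lambda>_. 1" "\<lambda>l. ps ! l"]
  by (simp add: kernel_sum_def[abs_def])

lemma inner_kernel_sum: "u \<in> H \<Longrightarrow> ip u (kernel_sum K ps) = (\<Sum>l<length ps. u (ps ! l))"
  using inner_kernel_lincomb[of "{..<length ps}" u "\<lambda>_. 1" "\<lambda>l. ps ! l"]
  by (simp add: kernel_sum_def[abs_def])

end

section \<open>Interpolation in a reproducing kernel Hilbert space\<close>

lemma nested_lists_approx_Sup:
  fixes E :: "'a list \<Rightarrow> real"
  assumes bdd: "\<And>zs. distinct zs \<Longrightarrow> E zs \<le> B"
    and mono: "\<And>zs zs'. distinct zs \<Longrightarrow> distinct zs' \<Longrightarrow> set zs \<subseteq> set zs' \<Longrightarrow> E zs \<le> E zs'"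
  obtains Y where "\<And>n. distinct (Y n)" and "\<And>m n. m \<le> n \<Longrightarrow> set (Y m) \<subseteq> set (Y n)"
    and "\<And>n zs. distinct zs \<Longrightarrow> E zs < E (Y n) + inverse (real (Suc n))"
proof -
  let ?D = "{zs :: 'a list. distinct zs}"
  define S where "S = (SUP zs\<in>?D. E zs)"
  have bdd_above: "bdd_above (E ` ?D)" by (rule bdd_aboveI2[where M = B]) (simp add: bdd)
  have "\<exists>zs\<in>?D. S - inverse (real (Suc n)) < E zs" for n
    unfolding S_def by (subst less_cSUP_iff[symmetric]) (auto intro: exI[of _ "[]"] bdd_above)
  then obtain Z where Z: "\<And>n. distinct (Z n)" "\<And>n. S - inverse (real (Suc n)) < E (Z n)"
    by (metis mem_Collect_eq)
  define Y where "Y n = remdups (concat (map Z [0..<Suc n]))" for n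
  have Y_distinct: "distinct (Y n)" for n by (simp add: Y_def)
  have set_Y: "set (Y n) = (\<Union>i\<in>{0..<Suc n}. set (Z i))" for n by (simp add: Y_def del: upt_Suc)
  show thesis
  proof
    show "distinct (Y n)" for n by (rule Y_distinct)
    show "m \<le> n \<Longrightarrow> set (Y m) \<subseteq> set (Y n)" for m n unfolding set_Y by (rule UN_mono) auto
    fix n and zs :: "'a list" assume "distinct zs"
    then have "E zs \<le> S" unfolding S_def by (auto intro: cSUP_upper bdd_above)
    also have "S < E (Z n) + inverse (real (Suc n))" using Z(2)[of n] by simp
    also have "E (Z n) \<le> E (Y n)" using Z(1) Y_distinct by (intro mono) (auto simp: set_Y)
    finally show "E zs < E (Y n) + inverse (real (Suc n))" by simp
  qed
qed

lemma cauchy_of_less_inverse_min: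
  fixes d :: "nat \<Rightarrow> nat \<Rightarrow> real"
  assumes "\<And>m n. d m n < inverse (real (Suc (min m n)))"
  shows "\<forall>e>0. \<exists>N. \<forall>m\<ge>N. \<forall>n\<ge>N. d m n < e"
proof (intro allI impI)
  fix e :: real assume "e > 0"
  then obtain N where N: "inverse (real (Suc N)) < e" using reals_Archimedean by blast
  have "d m n < e" if "N \<le> m" "N \<le> n" for m n
  proof -
    have "inverse (real (Suc (min m n))) \<le> inverse (real (Suc N))"
      using that by (simp add: le_imp_inverse_le)
    with assms[of m n] N show ?thesis by linarith
  qed
  then show "\<exists>N. \<forall>m\<ge>N. \<forall>n\<ge>N. d m n < e" by blast
qed

locale spd_rkhs = rkhs +
  assumes strictly_pd: "strictly_pd_kernel K"
begin

lemma kernel_interp_mem: "distinct zs \<Longrightarrow> kernel_interp K zs h \<in> H"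
  unfolding kernel_interp_def
  by (intro kernel_comb_mem mult_mat_vec_carrier[OF gram_inv_carrier[OF strictly_pd]])
    (simp_all add: node_vals_def)

lemma inner_kernel_interp:
  assumes "u \<in> H" "distinct zs" "node_vals zs u = node_vals zs h"
  shows "ip u (kernel_interp K zs h) = interp_energy K zs h"
  using assms gram_inv_carrier[OF strictly_pd assms(2)]
  by (simp add: kernel_interp_def interp_energy_def inner_kernel_comb node_vals_def)

lemma inner_diff_kernel_interp:
  assumes "distinct zs" "distinct zs'" "set zs \<subseteq> set zs'"
  shows "ip (\<lambda>x. kernel_interp K zs' h x - kernel_interp K zs h x)
            (\<lambda>x. kernel_interp K zs' h x - kernel_interp K zs h x)
         = interp_energy K zs' h - interp_energy K zs h"
proof -
  have "node_vals zs (kernel_interp K zs' h) = node_vals zs h"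
    unfolding node_vals_def using assms
    by (intro eq_vecI) (auto intro!: kernel_interp_node[OF strictly_pd])
  then have "ip (kernel_interp K zs' h) (kernel_interp K zs h) = interp_energy K zs h"
    using assms(1,2) by (simp add: inner_kernel_interp kernel_interp_mem)
  moreover have "ip (kernel_interp K zs h) (kernel_interp K zs h) = interp_energy K zs h"
    "ip (kernel_interp K zs' h) (kernel_interp K zs' h) = interp_energy K zs' h"
    using assms(1,2) by (simp_all add: inner_kernel_interp kernel_interp_mem
        node_vals_kernel_interp[OF strictly_pd])
  ultimately show ?thesis
    using assms(1,2) by (simp add: inner_diff_self kernel_interp_mem)
qed

lemma interp_energy_mono:
  "distinct zs \<Longrightarrow> distinct zs' \<Longrightarrow> set zs \<subseteq> set zs' \<Longrightarrow> interp_energy K zs h \<le> interp_energy K zs' h"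
  using inner_diff_kernel_interp inner_self_nonneg diff_mem kernel_interp_mem
  by (metis diff_ge_0_iff_ge)

lemma inner_diff_kernel_interp_nested:
  assumes Y_distinct: "\<And>n. distinct (Y n)" and Y_mono: "\<And>m n. m \<le> n \<Longrightarrow> set (Y m) \<subseteq> set (Y n)"
    and Y_sup: "\<And>n zs. distinct zs \<Longrightarrow> interp_energy K zs h < interp_energy K (Y n) h + inverse (real (Suc n))"
  shows "ip (\<lambda>x. kernel_interp K (Y m) h x - kernel_interp K (Y n) h x)
            (\<lambda>x. kernel_interp K (Y m) h x - kernel_interp K (Y n) h x) < inverse (real (Suc (min m n)))"
proof -
  have less: "ip (\<lambda>x. kernel_interp K (Y j) h x - kernel_interp K (Y i) h x)
      (\<lambda>x. kernel_interp K (Y j) h x - kernel_interp K (Y i) h x) < inverse (real (Suc i))"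
    if "i \<le> j" for i j
    using inner_diff_kernel_interp[OF Y_distinct Y_distinct Y_mono[OF that], of h]
      Y_sup[OF Y_distinct, of j i] by linarith
  show ?thesis
  proof (cases "m \<le> n")
    case True
    then show ?thesis
      using less[OF True] inner_diff_self_commute[OF kernel_interp_mem kernel_interp_mem, OF Y_distinct Y_distinct]
      by (simp add: min_def)
  next
    case False
    then show ?thesis using less[of n m] by (simp add: min_def)
  qed
qed

lemma mem_if_interp_energy_bounded:
  assumes "\<And>zs. distinct zs \<Longrightarrow> interp_energy K zs h \<le> B"
  shows "h \<in> H"
proof -
  obtain Y where Y_distinct: "\<And>n. distinct (Y n)"
    and Y_mono: "\<And>m n. m \<le> n \<Longrightarrow> set (Y m) \<subseteq> set (Y n)"
    and Y_sup: "\<And>n zs. distinct zs \<Longrightarrow> interp_energy K zs h < interp_energy K (Y n) h + inverse (real (Suc n))"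
    using nested_lists_approx_Sup[of "\<lambda>zs. interp_energy K zs h" B] assms interp_energy_mono
    by blast
  define F where "F n = kernel_interp K (Y n) h" for n
  have F: "F n \<in> H" for n by (simp add: F_def kernel_interp_mem Y_distinct)
  have "ip (\<lambda>x. F m x - F n x) (\<lambda>x. F m x - F n x) < inverse (real (Suc (min m n)))" for m n
    unfolding F_def by (rule inner_diff_kernel_interp_nested[OF Y_distinct Y_mono Y_sup])
  then have "\<forall>e>0. \<exists>N. \<forall>m\<ge>N. \<forall>n\<ge>N. ip (\<lambda>x. F m x - F n x) (\<lambda>x. F m x - F n x) < e"
    by (rule cauchy_of_less_inverse_min)
  then obtain w where w: "w \<in> H" and F_w: "(\<lambda>n. ip (\<lambda>x. F n x - w x) (\<lambda>x. F n x - w x)) \<longlonglongrightarrow> 0"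
    using complete F by blast
  have "w z = h z" for z
  proof -
    have "(\<lambda>n. F n z - w z) \<longlonglongrightarrow> 0"
      using F w F_w by (intro tendsto_eval_diff) auto
    moreover have "(\<lambda>n. kernel_interp K (List.insert z (Y n)) h z - F n z) \<longlonglongrightarrow> 0"
    proof (rule tendsto_eval_diff[OF kernel_interp_mem F _ LIMSEQ_inverse_real_of_nat])
      fix n
      show "distinct (List.insert z (Y n))" by (simp add: Y_distinct)
      show "ip (\<lambda>x. kernel_interp K (List.insert z (Y n)) h x - F n x)
             (\<lambda>x. kernel_interp K (List.insert z (Y n)) h x - F n x) \<le> inverse (real (Suc n))"
        using inner_diff_kernel_interp[of "Y n" "List.insert z (Y n)" h] Y_sup[of "List.insert z (Y n)" n]
        unfolding F_def[symmetric] by (simp add: Y_distinct subset_insertI)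
    qed
    then have "(\<lambda>n. h z - F n z) \<longlonglongrightarrow> 0"
      by (simp add: kernel_interp_node[OF strictly_pd] Y_distinct)
    ultimately have "(\<lambda>n. h z - w z) \<longlonglongrightarrow> 0"
      using tendsto_add by fastforce
    then show ?thesis by (simp add: LIMSEQ_const_iff)
  qed
  then have "w = h" by (rule ext)
  with w show ?thesis by simp
qed

lemma inner_kernel_interp_commute:
  assumes "u \<in> H" "v \<in> H" "distinct zs"
  shows "ip u (kernel_interp K zs v) = ip v (kernel_interp K zs u)"
proof -
  note R = gram_inv_carrier[OF strictly_pd assms(3)] and R_sym = transpose_gram_inv[OF strictly_pd assms(3)]
  have "ip u (kernel_interp K zs v) = node_vals zs u \<bullet> (gram_inv K zs *\<^sub>v node_vals zs v)"
    using assms R by (simp add: kernel_interp_def inner_kernel_comb)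
  also have "\<dots> = (gram_inv K zs *\<^sub>v node_vals zs u) \<bullet> node_vals zs v"
    using transpose_vec_mult_scalar[OF R node_vals_carrier node_vals_carrier] R_sym by simp
  also have "\<dots> = ip v (kernel_interp K zs u)"
    using assms R by (simp add: kernel_interp_def inner_kernel_comb comm_scalar_prod[OF _ node_vals_carrier])
  finally show ?thesis .
qed

lemma sum_kernel_interp:
  assumes "u \<in> H" "distinct zs"
  shows "(\<Sum>l<length ps. kernel_interp K zs u (ps ! l)) = ip u (kernel_interp K zs (kernel_sum K ps))"
  using inner_kernel_sum[OF kernel_interp_mem[OF assms(2)], of u ps]
    inner_commute[OF kernel_interp_mem[OF assms(2)] kernel_sum_mem]
    inner_kernel_interp_commute[OF kernel_sum_mem assms]
  by simp

lemma sum_noiseless_post_cov: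
  assumes "distinct zs"
  shows "(\<Sum>l<length ps. \<Sum>l'<length ps. noiseless_post_cov K zs (ps ! l) (ps ! l'))
         = ip (kernel_sum K ps) (kernel_sum K ps) - interp_energy K zs (kernel_sum K ps)"
proof -
  let ?B = "kernel_sum K ps"
  have "ip ?B ?B = (\<Sum>l<length ps. \<Sum>l'<length ps. K (ps ! l') (ps ! l))"
    using inner_kernel_sum[OF kernel_sum_mem, of ps ps] by (simp add: kernel_sum_def)
  also have "\<dots> = (\<Sum>l<length ps. \<Sum>l'<length ps. K (ps ! l) (ps ! l'))"
    by (rule sum.swap)
  finally have "(\<Sum>l<length ps. \<Sum>l'<length ps. K (ps ! l) (ps ! l')) = ip ?B ?B" ..
  moreover have "(\<Sum>l<length ps. \<Sum>l'<length ps. kernel_interp K zs (K (ps ! l')) (ps ! l))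
      = interp_energy K zs ?B"
  proof -
    have "(\<Sum>l<length ps. kernel_interp K zs (K (ps ! l')) (ps ! l)) = kernel_interp K zs ?B (ps ! l')"
      for l'
      using sum_kernel_interp[OF kernel_mem assms] reproducing[OF kernel_interp_mem[OF assms]]
        inner_commute[OF kernel_mem kernel_interp_mem[OF assms]]
      by simp
    then have "(\<Sum>l<length ps. \<Sum>l'<length ps. kernel_interp K zs (K (ps ! l')) (ps ! l))
        = (\<Sum>l'<length ps. kernel_interp K zs ?B (ps ! l'))"
      by (subst sum.swap) simp
    also have "\<dots> = ip ?B (kernel_interp K zs ?B)"
      using inner_kernel_sum[OF kernel_interp_mem[OF assms]] inner_commute[OF kernel_sum_mem kernel_interp_mem[OF assms]]
      by simp
    also have "\<dots> = interp_energy K zs ?B"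
      by (rule inner_kernel_interp[OF kernel_sum_mem assms refl])
    finally show ?thesis .
  qed
  ultimately show ?thesis
    by (simp add: noiseless_post_cov_eq_kernel_interp sum_subtractf)
qed

lemma interp_error_representer:
  assumes "distinct zs"
  obtains \<phi> where "\<phi> \<in> H"
    and "\<And>u. u \<in> H \<Longrightarrow> ip u \<phi> = (\<Sum>l<length ps. u (ps ! l)) - (\<Sum>l<length ps. kernel_interp K zs u (ps ! l))"
    and "ip \<phi> \<phi> = (\<Sum>l<length ps. \<Sum>l'<length ps. noiseless_post_cov K zs (ps ! l) (ps ! l'))"
proof
  let ?B = "kernel_sum K ps"
  let ?I = "kernel_interp K zs ?B"
  have B: "?B \<in> H" and I: "?I \<in> H" by (simp_all add: kernel_sum_mem kernel_interp_mem assms)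
  show "(\<lambda>x. ?B x - ?I x) \<in> H" using B I by (rule diff_mem)
  show "ip u (\<lambda>x. ?B x - ?I x) = (\<Sum>l<length ps. u (ps ! l)) - (\<Sum>l<length ps. kernel_interp K zs u (ps ! l))"
    if u: "u \<in> H" for u
    using inner_diff_right[OF u B I] inner_kernel_sum[OF u] sum_kernel_interp[OF u assms] by simp
  have "ip ?B ?I = interp_energy K zs ?B" "ip ?I ?I = interp_energy K zs ?B"
    using inner_kernel_interp[OF B assms refl] inner_kernel_interp[OF I assms]
      node_vals_kernel_interp[OF strictly_pd assms] by simp_all
  then show "ip (\<lambda>x. ?B x - ?I x) (\<lambda>x. ?B x - ?I x)
      = (\<Sum>l<length ps. \<Sum>l'<length ps. noiseless_post_cov K zs (ps ! l) (ps ! l'))"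
    using inner_diff_self[OF B I] sum_noiseless_post_cov[OF assms] by simp
qed

lemma sum_kernel_interp_error:
  assumes "u \<in> H" "distinct zs"
  shows "\<bar>(\<Sum>l<length ps. kernel_interp K zs u (ps ! l)) - (\<Sum>l<length ps. u (ps ! l))\<bar>
         \<le> sqrt (ip u u) * sqrt (\<Sum>l<length ps. \<Sum>l'<length ps. noiseless_post_cov K zs (ps ! l) (ps ! l'))"
proof -
  obtain \<phi> where \<phi>: "\<phi> \<in> H"
    and err: "ip u \<phi> = (\<Sum>l<length ps. u (ps ! l)) - (\<Sum>l<length ps. kernel_interp K zs u (ps ! l))"
    and var: "ip \<phi> \<phi> = (\<Sum>l<length ps. \<Sum>l'<length ps. noiseless_post_cov K zs (ps ! l) (ps ! l'))"
    using interp_error_representer[OF assms(2), of ps] assms(1) by metis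
  show ?thesis
    using cauchy_schwarz[OF assms(1) \<phi>] unfolding err var by linarith
qed

end

section \<open>Sums of kernels\<close>

lemma sqrt_mult_add_sqrt_mult_le:
  fixes p q r s :: real
  assumes "0 \<le> p" "0 \<le> q" "0 \<le> r" "0 \<le> s"
  shows "sqrt p * sqrt r + sqrt q * sqrt s \<le> sqrt (p + q) * sqrt (r + s)"
proof -
  have "0 \<le> (sqrt p * sqrt s - sqrt q * sqrt r)\<^sup>2" by simp
  then have "(sqrt p * sqrt r + sqrt q * sqrt s)\<^sup>2 \<le> (p + q) * (r + s)"
    using assms by (simp add: power2_eq_square algebra_simps real_sqrt_mult_self)
  then show ?thesis by (metis real_le_rsqrt real_sqrt_mult)
qed

lemma interp_energy_sum_kernel_le:
  assumes rk1: "rkhs K1 H1 ip1" and rk2: "rkhs K2 H2 ip2"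
    and spd: "strictly_pd_kernel (\<lambda>x y. K1 x y + K2 x y)"
    and f: "f \<in> H1" and g: "g \<in> H2" and zs: "distinct zs"
  shows "interp_energy (\<lambda>x y. K1 x y + K2 x y) zs (\<lambda>x. f x + g x) \<le> ip1 f f + ip2 g g"
proof -
  let ?K = "\<lambda>x y. K1 x y + K2 x y" and ?h = "\<lambda>x. f x + g x"
  let ?E = "interp_energy ?K zs ?h"
  define c where "c = gram_inv ?K zs *\<^sub>v node_vals zs ?h"
  have c: "c \<in> carrier_vec (length zs)"
    using gram_inv_carrier[OF spd zs] by (simp add: c_def)
  define P where "P = kernel_comb K1 zs c"
  define Q where "Q = kernel_comb K2 zs c"
  have P: "P \<in> H1" and Q: "Q \<in> H2"
    using rkhs.kernel_comb_mem[OF rk1 c] rkhs.kernel_comb_mem[OF rk2 c] by (simp_all add: P_def Q_def)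
  have "kernel_comb ?K zs c = (\<lambda>x. P x + Q x)"
    using c by (auto simp: P_def Q_def kernel_comb_def kvec_def scalar_prod_def algebra_simps
        sum.distrib)
  moreover have "node_vals zs (kernel_comb ?K zs c) = node_vals zs ?h"
    using node_vals_kernel_interp[OF spd zs, of ?h] by (simp add: kernel_interp_def c_def)
  ultimately have PQ: "node_vals zs P + node_vals zs Q = node_vals zs ?h"
    by (simp add: node_vals_add)
  have E: "?E = node_vals zs ?h \<bullet> c"
    by (simp add: interp_energy_def c_def)
  have E_PQ: "?E = ip1 P P + ip2 Q Q"
  proof -
    have "?E = node_vals zs P \<bullet> c + node_vals zs Q \<bullet> c"
      by (simp add: E add_scalar_prod_distrib[OF _ _ c] flip: PQ)
    also have "\<dots> = ip1 P P + ip2 Q Q"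
      using rkhs.inner_kernel_comb[OF rk1 P c] rkhs.inner_kernel_comb[OF rk2 Q c]
      unfolding P_def[symmetric] Q_def[symmetric] by simp
    finally show ?thesis .
  qed
  have "?E = node_vals zs f \<bullet> c + node_vals zs g \<bullet> c"
    by (simp add: E node_vals_add add_scalar_prod_distrib[OF _ _ c])
  also have "\<dots> = ip1 f P + ip2 g Q"
    using rkhs.inner_kernel_comb[OF rk1 f c] rkhs.inner_kernel_comb[OF rk2 g c] by (simp add: P_def Q_def)
  also have "\<dots> \<le> sqrt (ip1 f f) * sqrt (ip1 P P) + sqrt (ip2 g g) * sqrt (ip2 Q Q)"
    using rkhs.cauchy_schwarz[OF rk1 f P] rkhs.cauchy_schwarz[OF rk2 g Q] by linarith
  also have "\<dots> \<le> sqrt (ip1 f f + ip2 g g) * sqrt ?E"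
    unfolding E_PQ
    by (intro sqrt_mult_add_sqrt_mult_le rkhs.inner_self_nonneg[OF rk1] rkhs.inner_self_nonneg[OF rk2] f g P Q)
  finally have le: "sqrt ?E * sqrt ?E \<le> sqrt (ip1 f f + ip2 g g) * sqrt ?E"
    using E_PQ rkhs.inner_self_nonneg[OF rk1 P] rkhs.inner_self_nonneg[OF rk2 Q] by simp
  show ?thesis
  proof (cases "?E = 0")
    case True
    then show ?thesis
      using rkhs.inner_self_nonneg[OF rk1 f] rkhs.inner_self_nonneg[OF rk2 g] by simp
  next
    case False
    then have "0 < sqrt ?E"
      using E_PQ rkhs.inner_self_nonneg[OF rk1 P] rkhs.inner_self_nonneg[OF rk2 Q] by simp
    with le have "sqrt ?E \<le> sqrt (ip1 f f + ip2 g g)" by (rule mult_right_le_imp_le)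
    then show ?thesis by simp
  qed
qed

theorem sum_kernel_rkhs_mem:
  assumes "rkhs K1 H1 ip1" and "rkhs K2 H2 ip2" and "spd_rkhs (\<lambda>x y. K1 x y + K2 x y) H ip"
    and "f \<in> H1" and "g \<in> H2"
  shows "(\<lambda>x. f x + g x) \<in> H"
  using spd_rkhs.mem_if_interp_energy_bounded[OF assms(3)]
    interp_energy_sum_kernel_le[OF assms(1,2) spd_rkhs.strictly_pd[OF assms(3)] assms(4,5)]
  by blast

section \<open>Posterior mean with noisy observations\<close>

lemma kvec_noisy_kernel: "x \<notin> set xs \<Longrightarrow> kvec (noisy_kernel k \<sigma>) xs x = kvec k xs x"
  by (intro eq_vecI) (auto simp: kvec_def noisy_kernel_def delta_kernel_def)

lemma post_mean_eq_kernel_interp: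
  assumes "distinct xs" and "x \<notin> set xs"
  shows "post_mean k \<sigma> xs (node_vals xs h) x = kernel_interp (noisy_kernel k \<sigma>) xs h x"
  using assms
  by (simp add: post_mean_def kernel_interp_def kernel_comb_def kvec_noisy_kernel regInv_eq_gram_inv)

lemma post_cov_eq_noiseless_post_cov:
  assumes "distinct xs" and "x \<notin> set xs" and "x' \<notin> set xs"
  shows "post_cov k \<sigma> xs x x' = noiseless_post_cov (noisy_kernel k \<sigma>) xs x x' - \<sigma>\<^sup>2 * delta_kernel x x'"
  using assms
  by (simp add: post_cov_def noiseless_post_cov_def kvec_noisy_kernel regInv_eq_gram_inv noisy_kernel_def)

lemma sum_noiseless_post_cov_le:
  assumes "distinct xs" and "\<forall>p \<in> set ps. p \<notin> set xs"
  shows "(\<Sum>l<length ps. \<Sum>l'<length ps. noiseless_post_cov (noisy_kernel k \<sigma>) xs (ps ! l) (ps ! l'))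
         \<le> (\<Sum>l<length ps. \<Sum>l'<length ps. post_cov k \<sigma> xs (ps ! l) (ps ! l')) + real (length ps) ^ 2 * \<sigma>\<^sup>2"
proof -
  have "(\<Sum>l<length ps. \<Sum>l'<length ps. \<sigma>\<^sup>2 * delta_kernel (ps ! l) (ps ! l'))
      \<le> (\<Sum>l<length ps. \<Sum>l'<length ps. \<sigma>\<^sup>2)"
    by (intro sum_mono) (simp add: delta_kernel_def)
  then show ?thesis
    using assms by (simp add: post_cov_eq_noiseless_post_cov sum_subtractf power2_eq_square)
qed

lemma sum_post_mean_error:
  assumes "pd_kernel k" and "\<sigma> > 0" and "rkhs (noisy_kernel k \<sigma>) Hs ips" and h: "h \<in> Hs"
    and xs: "distinct xs" and ps: "\<forall>p \<in> set ps. p \<notin> set xs"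
  shows "\<bar>(\<Sum>l<length ps. post_mean k \<sigma> xs (node_vals xs h) (ps ! l)) - (\<Sum>l<length ps. h (ps ! l))\<bar>
         \<le> rkhs_norm ips h
           * sqrt ((\<Sum>l<length ps. \<Sum>l'<length ps. post_cov k \<sigma> xs (ps ! l) (ps ! l')) + real (length ps) ^ 2 * \<sigma>\<^sup>2)"
proof -
  interpret Hs: spd_rkhs "noisy_kernel k \<sigma>" Hs ips
    using assms(1-3) by (simp add: spd_rkhs_def spd_rkhs_axioms_def strictly_pd_noisy_kernel)
  have "(\<Sum>l<length ps. post_mean k \<sigma> xs (node_vals xs h) (ps ! l))
      = (\<Sum>l<length ps. kernel_interp (noisy_kernel k \<sigma>) xs h (ps ! l))"
    using ps by (intro sum.cong refl) (simp add: post_mean_eq_kernel_interp[OF xs])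
  then have "\<bar>(\<Sum>l<length ps. post_mean k \<sigma> xs (node_vals xs h) (ps ! l)) - (\<Sum>l<length ps. h (ps ! l))\<bar>
      \<le> sqrt (ips h h) * sqrt (\<Sum>l<length ps. \<Sum>l'<length ps. noiseless_post_cov (noisy_kernel k \<sigma>) xs (ps ! l) (ps ! l'))"
    using Hs.sum_kernel_interp_error[OF h xs, of ps] by simp
  also have "\<dots> \<le> rkhs_norm ips h
      * sqrt ((\<Sum>l<length ps. \<Sum>l'<length ps. post_cov k \<sigma> xs (ps ! l) (ps ! l')) + real (length ps) ^ 2 * \<sigma>\<^sup>2)"
    unfolding rkhs_norm_def
    by (intro mult_left_mono real_sqrt_le_mono sum_noiseless_post_cov_le xs ps)
      (simp add: Hs.inner_self_nonneg[OF h])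
  finally show ?thesis .
qed

lemma abs_sum_le_noise_norm:
  assumes "rkhs (\<lambda>x y. \<sigma>\<^sup>2 * delta_kernel x y) Hd ipd" and "g \<in> Hd" and "\<sigma> > 0"
  shows "\<bar>\<Sum>l<length ps. g (ps ! l)\<bar> \<le> real (length ps) * rkhs_norm ipd g * \<sigma>"
proof -
  have "\<bar>g x\<bar> \<le> rkhs_norm ipd g * \<sigma>" for x
    using rkhs.abs_eval_le[OF assms(1,2), of x] assms(3) by (simp add: rkhs_norm_def delta_kernel_def)
  then have "\<bar>\<Sum>l<length ps. g (ps ! l)\<bar> \<le> (\<Sum>l<length ps. rkhs_norm ipd g * \<sigma>)"
    by (intro order.trans[OF sum_abs] sum_mono)
  then show ?thesis by simp
qed

theorem mainTheorem16:
  fixes k :: "'a \<Rightarrow> 'a \<Rightarrow> real" and \<sigma> :: real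
    and Hk Hd Hs :: "('a \<Rightarrow> real) set"
    and ipk ipd ips :: "('a \<Rightarrow> real) \<Rightarrow> ('a \<Rightarrow> real) \<Rightarrow> real"
    and f g :: "'a \<Rightarrow> real" and xs xhs :: "'a list"
  assumes "pd_kernel k" and "\<sigma> > 0"
    and "is_rkhs k Hk ipk"
    and "is_rkhs (\<lambda>x y. \<sigma>^2 * delta_kernel x y) Hd ipd"
    and "is_rkhs (noisy_kernel k \<sigma>) Hs ips"
    and "f \<in> Hk" and "g \<in> Hd"
    and "distinct xs"
    and "\<forall>xh \<in> set xhs. xh \<notin> set xs"
  shows "let h = (\<lambda>x. f x + g x);
             ys = vec (length xs) (\<lambda>i. h (xs ! i));
             L = length xhs
         in \<bar>(\<Sum>i<L. post_mean k \<sigma> xs ys (xhs ! i)) - (\<Sum>i<L. f (xhs ! i))\<bar>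
            \<le> rkhs_norm ips h *
                 sqrt ((\<Sum>i<L. \<Sum>j<L. post_cov k \<sigma> xs (xhs ! i) (xhs ! j)) + real L ^ 2 * \<sigma>^2)
               + real L * rkhs_norm ipd g * \<sigma>"
proof -
  let ?h = "\<lambda>x. f x + g x"
  have "noisy_kernel k \<sigma> = (\<lambda>x y. k x y + \<sigma>\<^sup>2 * delta_kernel x y)"
    by (simp add: fun_eq_iff noisy_kernel_def)
  with assms(1,2,5) have "spd_rkhs (\<lambda>x y. k x y + \<sigma>\<^sup>2 * delta_kernel x y) Hs ips"
    by (metis rkhs.intro spd_rkhs.intro spd_rkhs_axioms.intro strictly_pd_noisy_kernel)
  then have "?h \<in> Hs"
    by (rule sum_kernel_rkhs_mem[OF rkhs.intro[OF assms(3)] rkhs.intro[OF assms(4)] _ assms(6,7)])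
  then have "\<bar>(\<Sum>l<length xhs. post_mean k \<sigma> xs (node_vals xs ?h) (xhs ! l)) - (\<Sum>l<length xhs. ?h (xhs ! l))\<bar>
      \<le> rkhs_norm ips ?h * sqrt ((\<Sum>l<length xhs. \<Sum>l'<length xhs. post_cov k \<sigma> xs (xhs ! l) (xhs ! l'))
           + real (length xhs) ^ 2 * \<sigma>\<^sup>2)"
    by (rule sum_post_mean_error[OF assms(1,2) rkhs.intro[OF assms(5)] _ assms(8,9)])
  moreover have "\<bar>\<Sum>l<length xhs. g (xhs ! l)\<bar> \<le> real (length xhs) * rkhs_norm ipd g * \<sigma>"
    by (rule abs_sum_le_noise_norm[OF rkhs.intro[OF assms(4)] assms(7,2)])
  ultimately show ?thesis
    unfolding Let_def sum.distrib node_vals_def by linarith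
qed

end
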